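(* Let $n,m\geq1$, let $a_1\geq\cdots\geq a_n$ and $b_1\geq\cdots\geq b_m$ be nonnegative integers, let $0\leq k\leq\nu\leq\min\{n,m\}$ be integers, and let $N=N(d_A,d_B,\nu,k)$. Then some $s$-$t$-cut of minimum capacity in $N$ is clean.
   Context: Network definition: for nonnegative integers $a_1\geq\cdots\geq a_n$, $b_1\geq\cdots\geq b_m$ and integers $0\leq k\leq\nu\leq\min\{n,m\}$, $N(d_A,d_B,\nu,k)=(D,c)$ where $D$ is the digraph with vertex set $\{s,t,v_1,\ldots,v_n,w_1,\ldots,w_m\}$ and arcs: $(s,v_i)$ for all $i\in[n]$; $(w_j,t)$ for all $j\in[m]$; and $(v_i,w_j)$ for all $(i,j)\in[n]\times[m]$ such that ($i\leq k$ or $j\leq \nu-k$) and $i+j\neq \nu+1$. The capacity $c$ is: $c((s,v_i))=a_i-1$ for $i\in[k]$ and $a_i$ for $i\in[n]\setminus[k]$; $c((w_j,t))=b_j-1$ for $j\in[\nu-k]$ and $b_j$ for $j\in[m]\setminus[\nu-k]$; and $c((v_i,w_j))=1$ for every arc $(v_i,w_j)$. Here $[k]$ denotes $\{1,\ldots,k\}$. An $s$-$t$-cut generated by a vertex set $X$ with $s\in X$, $t\notin X$ is the set of arcs from $X$ to its complement; its capacity is the sum of their capacities. Write $X=\{s\}\cup S_1\cup S_2\cup T_1\cup T_2$ with $S_1\subseteq\{v_1,\ldots,v_k\}$, $S_2\subseteq\{v_{k+1},\ldots,v_n\}$, $T_1\subseteq\{w_1,\ldots,w_{\nu-k}\}$,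 $T_2\subseteq\{w_{\nu-k+1},\ldots,w_m\}$. The cut is clean if: (1) if $v_i\in S_1$ and $v_j\in\{v_1,\ldots,v_k\}\setminus S_1$ then $a_i\geq a_j$; (2) if $w_i\in T_1$ and $w_j\in\{w_1,\ldots,w_{\nu-k}\}\setminus T_1$ then $b_i\leq b_j$; (3) if $v_i\in S_2$ and $v_j\in\{v_{k+1},\ldots,v_n\}\setminus S_2$ then $a_i\geq a_j$; (4) if $w_i\in T_2$ and $w_j\in\{w_{\nu-k+1},\ldots,w_m\}\setminus T_2$ then $b_i\leq b_j$; (5) if $v_i\in S_1$, $v_j\in\{v_1,\ldots,v_k\}\setminus S_1$ and $a_i=a_j$, then $i>j$; (6) if $v_i\in S_2$, $v_j\in\{v_{k+1},\ldots,v_n\}\setminus S_2$ and $a_i=a_j$, then $i>j$. *)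

theory Defs
  imports Main
begin

datatype vert = Src | Snk | Vv nat | Ww nat

definition net_vertices :: "nat \<Rightarrow> nat \<Rightarrow> vert set" where
  "net_vertices n m = {Src, Snk} \<union> Vv ` {1..n} \<union> Ww ` {1..m}"

definition net_arcs :: "nat \<Rightarrow> nat \<Rightarrow> nat \<Rightarrow> nat \<Rightarrow> (vert \<times> vert) set" where
  "net_arcs n m \<nu> k =
     {(Src, Vv i) | i. i \<in> {1..n}}
   \<union> {(Ww j, Snk) | j. j \<in> {1..m}}
   \<union> {(Vv i, Ww j) | i j. i \<in> {1..n} \<and> j \<in> {1..m} \<and> (i \<le> k \<or> j \<le> \<nu> - k) \<and> i + j \<noteq> \<nu> + 1}"

text \<open>Capacity function (integer valued, since a_i - 1 may be negative when a_i = 0).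
  Its value off the arc set is irrelevant.\<close>
definition net_cap :: "(nat \<Rightarrow> nat) \<Rightarrow> (nat \<Rightarrow> nat) \<Rightarrow> nat \<Rightarrow> nat \<Rightarrow> vert \<times> vert \<Rightarrow> int" where
  "net_cap a b \<nu> k e =
     (case e of
        (Src, Vv i) \<Rightarrow> (if i \<le> k then int (a i) - 1 else int (a i))
      | (Ww j, Snk) \<Rightarrow> (if j \<le> \<nu> - k then int (b j) - 1 else int (b j))
      | _ \<Rightarrow> 1)"

definition is_st_cut :: "nat \<Rightarrow> nat \<Rightarrow> vert set \<Rightarrow> bool" where
  "is_st_cut n m X \<longleftrightarrow> Src \<in> X \<and> Snk \<notin> X \<and> X \<subseteq> net_vertices n m"

definition cut_capacity ::
  "nat \<Rightarrow> nat \<Rightarrow> (nat \<Rightarrow> nat) \<Rightarrow> (nat \<Rightarrow> nat) \<Rightarrow> nat \<Rightarrow> nat \<Rightarrow> vert set \<Rightarrow> int" where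
  "cut_capacity n m a b \<nu> k X =
     (\<Sum>e \<in> {e \<in> net_arcs n m \<nu> k. fst e \<in> X \<and> snd e \<notin> X}. net_cap a b \<nu> k e)"

definition is_min_cut ::
  "nat \<Rightarrow> nat \<Rightarrow> (nat \<Rightarrow> nat) \<Rightarrow> (nat \<Rightarrow> nat) \<Rightarrow> nat \<Rightarrow> nat \<Rightarrow> vert set \<Rightarrow> bool" where
  "is_min_cut n m a b \<nu> k X \<longleftrightarrow>
     is_st_cut n m X \<and>
     (\<forall>Y. is_st_cut n m Y \<longrightarrow> cut_capacity n m a b \<nu> k X \<le> cut_capacity n m a b \<nu> k Y)"

text \<open>Clean cuts, conditions (1)-(6), with S1 = X restricted to v_1..v_k,
  S2 = X restricted to v_{k+1}..v_n, T1 = X restricted to w_1..w_{nu-k},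
  T2 = X restricted to w_{nu-k+1}..w_m.\<close>
definition is_clean ::
  "nat \<Rightarrow> nat \<Rightarrow> (nat \<Rightarrow> nat) \<Rightarrow> (nat \<Rightarrow> nat) \<Rightarrow> nat \<Rightarrow> nat \<Rightarrow> vert set \<Rightarrow> bool" where
  "is_clean n m a b \<nu> k X \<longleftrightarrow>
     (\<forall>i \<in> {1..k}. \<forall>j \<in> {1..k}. Vv i \<in> X \<and> Vv j \<notin> X \<longrightarrow> a i \<ge> a j) \<and>
     (\<forall>i \<in> {1..\<nu>-k}. \<forall>j \<in> {1..\<nu>-k}. Ww i \<in> X \<and> Ww j \<notin> X \<longrightarrow> b i \<le> b j) \<and>
     (\<forall>i \<in> {k+1..n}. \<forall>j \<in> {k+1..n}. Vv i \<in> X \<and> Vv j \<notin> X \<longrightarrow> a i \<ge> a j) \<and>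
     (\<forall>i \<in> {\<nu>-k+1..m}. \<forall>j \<in> {\<nu>-k+1..m}. Ww i \<in> X \<and> Ww j \<notin> X \<longrightarrow> b i \<le> b j) \<and>
     (\<forall>i \<in> {1..k}. \<forall>j \<in> {1..k}. Vv i \<in> X \<and> Vv j \<notin> X \<and> a i = a j \<longrightarrow> i > j) \<and>
     (\<forall>i \<in> {k+1..n}. \<forall>j \<in> {k+1..n}. Vv i \<in> X \<and> Vv j \<notin> X \<and> a i = a j \<longrightarrow> i > j)"

end

theory Submission
  imports Defs "HOL-Library.Product_Lexorder"
begin

text \<open>
  Describe a cut by the index sets A, B of the v- and w-vertices on the source side. Within one
  block (v_i with i \<le> k, v_i with i > k, and likewise for the w's) all vertices have the same
  neighbourhood in the complete bipartite pattern, up to the single missing diagonal arc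
  (v_i, w_(\<nu>+1-i)). So exchanging two vertices of one block changes the capacity by the
  difference of their capacities to s resp. t, plus at most one. Among all minimum cuts take one
  minimising a potential that favours large a_i and large indices on the source side. A
  violation of cleanliness then yields an exchange (in the tie case possibly combined with a
  second exchange across the diagonal, or replaced by a single insertion or deletion) that does
  not increase the capacity but strictly decreases the potential.
\<close>

lemma card_Diff_singleton_int:
  "finite S \<Longrightarrow> int (card (S - {x})) = int (card S) - (if x \<in> S then 1 else 0)"
  using card_Suc_Diff1[of S x] by (cases "x \<in> S") auto

locale cut_network =
  fixes n m \<nu> k :: nat and a b :: "nat \<Rightarrow> nat"
  assumes a_antimono: "\<And>i j. 1 \<le> i \<Longrightarrow> i \<le> j \<Longrightarrow> j \<le> n \<Longrightarrow> a j \<le> a i"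
    and b_antimono: "\<And>i j. 1 \<le> i \<Longrightarrow> i \<le> j \<Longrightarrow> j \<le> m \<Longrightarrow> b j \<le> b i"
    and k_le_nu: "k \<le> \<nu>" and nu_le_n: "\<nu> \<le> n" and nu_le_m: "\<nu> \<le> m"
begin

definition block_arc :: "nat \<Rightarrow> nat \<Rightarrow> bool" where
  "block_arc x y \<longleftrightarrow> x \<in> {1..n} \<and> y \<in> {1..m} \<and> (x \<le> k \<or> y \<le> \<nu> - k)"

definition arc :: "nat \<Rightarrow> nat \<Rightarrow> bool" where
  "arc x y \<longleftrightarrow> block_arc x y \<and> x + y \<noteq> \<nu> + 1"

definition src_cap :: "nat \<Rightarrow> int" where
  "src_cap x = (if x \<le> k then int (a x) - 1 else int (a x))"

definition snk_cap :: "nat \<Rightarrow> int" where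
  "snk_cap y = (if y \<le> \<nu> - k then int (b y) - 1 else int (b y))"

definition cut_arcs :: "nat set \<Rightarrow> nat set \<Rightarrow> (nat \<times> nat) set" where
  "cut_arcs A B = {(x, y). arc x y \<and> x \<in> A \<and> y \<notin> B}"

definition cap :: "nat set \<Rightarrow> nat set \<Rightarrow> int" where
  "cap A B = (\<Sum>x \<in> {1..n} - A. src_cap x) + (\<Sum>y \<in> B. snk_cap y) + int (card (cut_arcs A B))"

definition out_nbrs :: "nat set \<Rightarrow> nat \<Rightarrow> nat set" where
  "out_nbrs B x = {y. arc x y \<and> y \<notin> B}"

definition in_nbrs :: "nat set \<Rightarrow> nat \<Rightarrow> nat set" where
  "in_nbrs A y = {x. arc x y \<and> x \<in> A}"

definition out_block :: "nat set \<Rightarrow> nat \<Rightarrow> nat set" where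
  "out_block B x = {y. block_arc x y \<and> y \<notin> B}"

definition in_block :: "nat set \<Rightarrow> nat \<Rightarrow> nat set" where
  "in_block A y = {x. block_arc x y \<and> x \<in> A}"

lemma finite_cut_arcs: "finite (cut_arcs A B)"
  by (rule finite_subset[of _ "{1..n} \<times> {1..m}"]) (auto simp: cut_arcs_def arc_def block_arc_def)

lemma finite_out_block: "finite (out_block B x)"
  by (rule finite_subset[of _ "{1..m}"]) (auto simp: out_block_def block_arc_def)

lemma finite_in_block: "finite (in_block A y)"
  by (rule finite_subset[of _ "{1..n}"]) (auto simp: in_block_def block_arc_def)

text \<open>The arc between v_x and w_(partner x) is the one removed from the block pattern. For
  x > \<nu> the truncated difference is 0, which is no vertex index, so nothing is removed.\<close>
abbreviation partner :: "nat \<Rightarrow> nat" where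
  "partner x \<equiv> \<nu> + 1 - x"

lemma out_nbrs_eq: "out_nbrs B x = out_block B x - {partner x}"
  by (auto simp: out_nbrs_def out_block_def arc_def block_arc_def)

lemma in_nbrs_eq: "in_nbrs A y = in_block A y - {partner y}"
  by (auto simp: in_nbrs_def in_block_def arc_def block_arc_def)

lemma card_out_nbrs:
  "int (card (out_nbrs B x)) = int (card (out_block B x)) - (if partner x \<in> out_block B x then 1 else 0)"
  by (simp add: out_nbrs_eq card_Diff_singleton_int finite_out_block)

lemma card_in_nbrs:
  "int (card (in_nbrs A y)) = int (card (in_block A y)) - (if partner y \<in> in_block A y then 1 else 0)"
  by (simp add: in_nbrs_eq card_Diff_singleton_int finite_in_block)

lemma card_out_nbrs_le: "int (card (out_nbrs B x)) \<le> int (card (out_block B x))"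
  by (simp add: card_out_nbrs)

lemma card_out_block_le: "int (card (out_block B x)) \<le> int (card (out_nbrs B x)) + 1"
  by (simp add: card_out_nbrs)

lemma card_in_nbrs_le: "int (card (in_nbrs A y)) \<le> int (card (in_block A y))"
  by (simp add: card_in_nbrs)

lemma card_in_block_le: "int (card (in_block A y)) \<le> int (card (in_nbrs A y)) + 1"
  by (simp add: card_in_nbrs)

lemma out_block_eq: "(x \<le> k \<longleftrightarrow> x' \<le> k) \<Longrightarrow> x \<in> {1..n} \<Longrightarrow> x' \<in> {1..n} \<Longrightarrow> out_block B x = out_block B x'"
  by (auto simp: out_block_def block_arc_def)

lemma in_block_eq: "(y \<le> \<nu> - k \<longleftrightarrow> y' \<le> \<nu> - k) \<Longrightarrow> y \<in> {1..m} \<Longrightarrow> y' \<in> {1..m} \<Longrightarrow> in_block A y = in_block A y'"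
  by (auto simp: in_block_def block_arc_def)

lemma cap_insert_v:
  assumes "j \<in> {1..n}" "j \<notin> A"
  shows "cap (insert j A) B = cap A B - src_cap j + int (card (out_nbrs B j))"
proof -
  have src: "(\<Sum>x \<in> {1..n} - A. src_cap x) = src_cap j + (\<Sum>x \<in> {1..n} - insert j A. src_cap x)"
  proof -
    have "{1..n} - insert j A = {1..n} - A - {j}"
      by auto
    then show ?thesis
      using sum.remove[of "{1..n} - A" j src_cap] assms by simp
  qed
  have "cut_arcs (insert j A) B = cut_arcs A B \<union> Pair j ` out_nbrs B j"
    by (auto simp: cut_arcs_def out_nbrs_def)
  moreover have "cut_arcs A B \<inter> Pair j ` out_nbrs B j = {}"
    using assms by (auto simp: cut_arcs_def)
  moreover have "finite (out_nbrs B j)"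
    by (simp add: out_nbrs_eq finite_out_block)
  ultimately have "card (cut_arcs (insert j A) B) = card (cut_arcs A B) + card (out_nbrs B j)"
    by (simp add: card_Un_disjoint finite_cut_arcs card_image inj_on_def)
  then show ?thesis
    unfolding cap_def src by simp
qed

lemma cap_remove_v:
  assumes "i \<in> {1..n}" "i \<in> A"
  shows "cap (A - {i}) B = cap A B + src_cap i - int (card (out_nbrs B i))"
  using cap_insert_v[of i "A - {i}" B] assms by (simp add: insert_absorb)

lemma cap_insert_w:
  assumes "finite B" "y \<notin> B"
  shows "cap A (insert y B) = cap A B + snk_cap y - int (card (in_nbrs A y))"
proof -
  have "cut_arcs A B = cut_arcs A (insert y B) \<union> (\<lambda>x. (x, y)) ` in_nbrs A y"
    using assms by (auto simp: cut_arcs_def in_nbrs_def)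
  moreover have "cut_arcs A (insert y B) \<inter> (\<lambda>x. (x, y)) ` in_nbrs A y = {}"
    by (auto simp: cut_arcs_def)
  moreover have "finite (in_nbrs A y)"
    by (simp add: in_nbrs_eq finite_in_block)
  ultimately have "card (cut_arcs A B) = card (cut_arcs A (insert y B)) + card (in_nbrs A y)"
    by (simp add: card_Un_disjoint finite_cut_arcs card_image inj_on_def)
  then show ?thesis
    unfolding cap_def using assms by simp
qed

lemma cap_remove_w:
  assumes "finite B" "y \<in> B"
  shows "cap A (B - {y}) = cap A B - snk_cap y + int (card (in_nbrs A y))"
  using cap_insert_w[of "B - {y}" y A] assms by (simp add: insert_absorb)

lemma cap_swap_v:
  assumes "i \<in> {1..n}" "i \<in> A" "j \<in> {1..n}" "j \<notin> A"
  shows "cap (insert j (A - {i})) B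
    = cap A B + src_cap i - src_cap j - int (card (out_nbrs B i)) + int (card (out_nbrs B j))"
  using assms by (simp add: cap_insert_v cap_remove_v)

lemma cap_swap_w:
  assumes "finite B" "i \<in> B" "j \<notin> B"
  shows "cap A (insert j (B - {i}))
    = cap A B - snk_cap i + snk_cap j + int (card (in_nbrs A i)) - int (card (in_nbrs A j))"
  using assms by (simp add: cap_insert_w cap_remove_w)

text \<open>The factor n + 1 lets a difference in a dominate any difference of indices. The offset
  makes v_weight x positive for x \<le> \<nu> and negative for x > \<nu> whenever a x = a \<nu>.\<close>
definition v_weight :: "nat \<Rightarrow> int" where
  "v_weight x = 2 * ((int n + 1) * (int (a \<nu>) - int (a x)) + int \<nu> - int x) + 1"

definition pot :: "nat set \<Rightarrow> nat set \<Rightarrow> int" where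
  "pot A B = (\<Sum>x \<in> A. v_weight x) - (\<Sum>y \<in> B. int y)"

lemma v_weight_diff:
  "v_weight j - v_weight i = 2 * ((int n + 1) * (int (a i) - int (a j)) + int i - int j)"
  by (simp add: v_weight_def algebra_simps)

lemma pot_swap_v:
  "finite A \<Longrightarrow> i \<in> A \<Longrightarrow> j \<notin> A \<Longrightarrow> pot (insert j (A - {i})) B = pot A B - v_weight i + v_weight j"
  by (simp add: pot_def sum_diff1)

lemma pot_swap_w:
  "finite B \<Longrightarrow> i \<in> B \<Longrightarrow> j \<notin> B \<Longrightarrow> pot A (insert j (B - {i})) = pot A B + int i - int j"
  by (simp add: pot_def sum_diff1)

text \<open>Pairs are ordered lexicographically (Product_Lexorder): capacity first, then potential.\<close>
definition optimal :: "nat set \<Rightarrow> nat set \<Rightarrow> bool" where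
  "optimal A B \<longleftrightarrow> A \<subseteq> {1..n} \<and> B \<subseteq> {1..m} \<and>
     (\<forall>A' \<subseteq> {1..n}. \<forall>B' \<subseteq> {1..m}. (cap A B, pot A B) \<le> (cap A' B', pot A' B'))"

lemma optimal_exists: "\<exists>A B. optimal A B"
proof -
  let ?P = "Pow {1..n} \<times> Pow {1..m}" and ?f = "\<lambda>p. (cap (fst p) (snd p), pot (fst p) (snd p))"
  have fin: "finite ?P" and ne: "?P \<noteq> {}"
    by auto
  obtain A B where AB: "arg_min_on ?f ?P = (A, B)"
    by fastforce
  have "(A, B) \<in> ?P"
    using arg_min_if_finite(1)[OF fin ne, of ?f] unfolding AB .
  moreover have "(cap A B, pot A B) \<le> (cap A' B', pot A' B')"
    if "A' \<subseteq> {1..n}" "B' \<subseteq> {1..m}" for A' B'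
    using arg_min_least[of ?P "(A', B')" ?f] fin ne that unfolding AB by simp
  ultimately have "optimal A B"
    unfolding optimal_def by simp
  then show ?thesis
    by blast
qed

lemma optimalD:
  assumes "optimal A B"
  shows "A \<subseteq> {1..n}" "B \<subseteq> {1..m}" "finite A" "finite B"
  using assms finite_subset[of A "{1..n}"] finite_subset[of B "{1..m}"] by (auto simp: optimal_def)

lemma optimal_lex_le:
  "optimal A B \<Longrightarrow> A' \<subseteq> {1..n} \<Longrightarrow> B' \<subseteq> {1..m} \<Longrightarrow> (cap A B, pot A B) \<le> (cap A' B', pot A' B')"
  unfolding optimal_def by blast

lemma optimal_cap_le:
  "optimal A B \<Longrightarrow> A' \<subseteq> {1..n} \<Longrightarrow> B' \<subseteq> {1..m} \<Longrightarrow> cap A B \<le> cap A' B'"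
  by (drule optimal_lex_le) auto

lemma optimal_pot_le:
  "optimal A B \<Longrightarrow> A' \<subseteq> {1..n} \<Longrightarrow> B' \<subseteq> {1..m} \<Longrightarrow> cap A' B' \<le> cap A B \<Longrightarrow> pot A B \<le> pot A' B'"
  by (drule optimal_lex_le) auto

lemma optimal_v_sorted:
  assumes opt: "optimal A B" and i: "i \<in> A" and j: "j \<in> {1..n} - A"
    and same_block: "i \<le> k \<longleftrightarrow> j \<le> k"
  shows "a j \<le> a i"
proof (rule ccontr)
  assume "\<not> a j \<le> a i"
  then have less: "int (a i) + 1 \<le> int (a j)"
    by simp
  have i_n: "i \<in> {1..n}"
    using optimalD(1)[OF opt] i by blast
  let ?A' = "insert j (A - {i})"
  have "out_block B i = out_block B j"
    using out_block_eq[OF same_block i_n] j by blast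
  then have "cap ?A' B \<le> cap A B"
    using cap_swap_v[OF i_n i, of j B] j less same_block
      card_out_block_le[of B i] card_out_nbrs_le[of B j]
    by (simp add: src_cap_def)
  moreover have "?A' \<subseteq> {1..n}"
    using optimalD(1)[OF opt] j by auto
  ultimately have "pot A B \<le> pot ?A' B"
    using optimal_pot_le[OF opt _ optimalD(2)[OF opt]] by blast
  moreover have "(int n + 1) * (int (a i) - int (a j)) \<le> (int n + 1) * (-1)"
    using less by (intro mult_left_mono) auto
  ultimately show False
    using pot_swap_v[OF optimalD(3)[OF opt] i, of j B] v_weight_diff[of j i] i_n j by auto
qed

lemma optimal_w_sorted:
  assumes opt: "optimal A B" and i: "i \<in> B" and j: "j \<in> {1..m} - B"
    and same_block: "i \<le> \<nu> - k \<longleftrightarrow> j \<le> \<nu> - k"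
  shows "b i \<le> b j"
proof (rule ccontr)
  assume "\<not> b i \<le> b j"
  then have less: "int (b j) + 1 \<le> int (b i)"
    by simp
  have i_m: "i \<in> {1..m}"
    using optimalD(2)[OF opt] i by blast
  have "i < j"
    using b_antimono[of j i] i_m j less by force
  let ?B' = "insert j (B - {i})"
  have "in_block A i = in_block A j"
    using in_block_eq[OF same_block i_m] j by blast
  then have "cap A ?B' \<le> cap A B"
    using cap_swap_w[OF optimalD(4)[OF opt] i, of j A] j less same_block
      card_in_nbrs_le[of A i] card_in_block_le[of A j]
    by (simp add: snk_cap_def)
  moreover have "?B' \<subseteq> {1..m}"
    using optimalD(2)[OF opt] j by auto
  ultimately have "pot A B \<le> pot A ?B'"
    using optimal_pot_le[OF opt optimalD(1)[OF opt]] by blast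
  then show False
    using pot_swap_w[OF optimalD(4)[OF opt] i, of j A] j \<open>i < j\<close> by simp
qed

context
  fixes A B :: "nat set" and i j :: nat
  assumes opt: "optimal A B" and i: "i \<in> A" and j: "j \<in> {1..n} - A"
    and same_block: "i \<le> k \<longleftrightarrow> j \<le> k" and tie: "a i = a j" and i_less_j: "i < j"
begin

lemma tie_i_range: "i \<in> {1..n}"
  using optimalD(1)[OF opt] i by blast

lemma tie_out_block_eq: "out_block B i = out_block B j"
  using out_block_eq[OF same_block tie_i_range] j by blast

lemma tie_v_weight_diff: "v_weight j - v_weight i = 2 * (int i - int j)"
  using v_weight_diff[of j i] tie by simp

text \<open>Exchanging v_i for v_j costs one, as the arc to w_(partner i) enters the cut; exchanging
  w_(partner j) for w_(partner i) as well gains it back.\<close>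
lemma tie_partner_below_nu:
  assumes p: "partner i \<in> out_block B i" and j_nu: "j \<le> \<nu>"
  shows "partner j \<in> out_block B j"
proof (rule ccontr)
  assume q: "partner j \<notin> out_block B j"
  let ?p = "partner i" and ?q = "partner j"
  define A' where "A' = insert j (A - {i})"
  define B' where "B' = insert ?p (B - {?q})"
  have "?q \<in> {1..m}"
    using j j_nu nu_le_m by auto
  then have "block_arc j ?q"
    using j j_nu by (auto simp: block_arc_def)
  then have q_B: "?q \<in> B"
    using q by (simp add: out_block_def)
  have p_m: "?p \<in> {1..m}" and p_B: "?p \<notin> B"
    using p by (auto simp: out_block_def block_arc_def)
  have q_less_p: "?q < ?p"
    using i_less_j j_nu by auto
  have p_q_block: "?p \<le> \<nu> - k \<longleftrightarrow> ?q \<le> \<nu> - k"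
    using same_block i_less_j j_nu k_le_nu by auto
  have "int (card (out_nbrs B i)) = int (card (out_block B j)) - 1"
    using card_out_nbrs[of B i] p tie_out_block_eq by simp
  moreover have "int (card (out_nbrs B j)) = int (card (out_block B j))"
    using card_out_nbrs[of B j] q by simp
  ultimately have cap_A': "cap A' B = cap A B + 1"
    using cap_swap_v[OF tie_i_range i, of j B] j tie same_block by (simp add: A'_def src_cap_def)
  have "j \<in> in_block A' ?q"
    using \<open>block_arc j ?q\<close> by (simp add: in_block_def A'_def)
  then have in_q: "int (card (in_nbrs A' ?q)) = int (card (in_block A' ?q)) - 1"
    using card_in_nbrs[of A' ?q] j_nu i_less_j by simp
  have "partner ?p \<notin> in_block A' ?p"
    using i_less_j j_nu by (simp add: in_block_def A'_def)
  then have in_p: "int (card (in_nbrs A' ?p)) = int (card (in_block A' ?q))"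
    using card_in_nbrs[of A' ?p] in_block_eq[OF p_q_block p_m \<open>?q \<in> {1..m}\<close>] by simp
  have "b ?p \<le> b ?q"
    using b_antimono[of ?q ?p] q_less_p p_m j_nu by simp
  then have "cap A' B' \<le> cap A B"
    using cap_swap_w[OF optimalD(4)[OF opt] q_B p_B, of A'] cap_A' in_q in_p p_q_block
    by (simp add: B'_def snk_cap_def)
  moreover have "A' \<subseteq> {1..n}" "B' \<subseteq> {1..m}"
    using optimalD(1,2)[OF opt] j p_m by (auto simp: A'_def B'_def)
  ultimately have "pot A B \<le> pot A' B'"
    using optimal_pot_le[OF opt] by blast
  moreover have "pot A' B' = pot A B - v_weight i + v_weight j + int ?q - int ?p"
    using pot_swap_w[OF optimalD(4)[OF opt] q_B p_B, of A'] pot_swap_v[OF optimalD(3)[OF opt] i, of j B] j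
    by (simp add: A'_def B'_def)
  ultimately show False
    using tie_v_weight_diff i_less_j q_less_p by (simp add: algebra_simps)
qed

text \<open>Here a i = a \<nu> = a j, so v_weight i > 0 > v_weight j; deleting v_i or adding v_j
  decreases the potential, and one of them does not increase the capacity.\<close>
lemma tie_partner_beyond_nu:
  assumes j_nu: "\<nu> < j"
  shows "partner i \<notin> out_block B i"
proof
  assume p: "partner i \<in> out_block B i"
  then have i_nu: "i \<le> \<nu>"
    by (auto simp: out_block_def block_arc_def)
  have "a \<nu> = a i"
    using a_antimono[of i \<nu>] a_antimono[of \<nu> j] tie_i_range i_nu j_nu j tie by auto
  then have vw_i: "v_weight i = 2 * (int \<nu> - int i) + 1" and vw_j: "v_weight j = 2 * (int \<nu> - int j) + 1"
    by (simp_all add: v_weight_def tie)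
  have "\<not> j \<le> k"
    using j_nu k_le_nu by simp
  then have src_i: "src_cap i = int (a i)" and src_j: "src_cap j = int (a i)"
    using same_block tie by (simp_all add: src_cap_def)
  have out_i: "int (card (out_nbrs B i)) = int (card (out_block B j)) - 1"
    using card_out_nbrs[of B i] p tie_out_block_eq by simp
  have out_j: "int (card (out_nbrs B j)) = int (card (out_block B j))"
    using card_out_nbrs[of B j] j_nu by (simp add: out_block_def block_arc_def)
  show False
  proof (cases "int (a i) + 1 \<le> int (card (out_block B j))")
    case True
    then have "cap (A - {i}) B \<le> cap A B"
      using cap_remove_v[OF tie_i_range i, of B] src_i out_i by simp
    then have "pot A B \<le> pot (A - {i}) B"
      using optimal_pot_le[OF opt _ optimalD(2)[OF opt]] optimalD(1)[OF opt] by blast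
    then show False
      using optimalD(3)[OF opt] i vw_i i_nu by (simp add: pot_def sum_diff1)
  next
    case False
    then have "cap (insert j A) B \<le> cap A B"
      using cap_insert_v[of j A B] j src_j out_j by simp
    moreover have "insert j A \<subseteq> {1..n}"
      using optimalD(1)[OF opt] j by simp
    ultimately have "pot A B \<le> pot (insert j A) B"
      using optimal_pot_le[OF opt _ optimalD(2)[OF opt]] by blast
    then show False
      using optimalD(3)[OF opt] j vw_j j_nu by (simp add: pot_def)
  qed
qed

lemma tie_partner_mono: "partner i \<in> out_block B i \<Longrightarrow> partner j \<in> out_block B j"
  using tie_partner_below_nu tie_partner_beyond_nu by (cases "j \<le> \<nu>") auto

end

lemma optimal_v_tie:
  assumes opt: "optimal A B" and i: "i \<in> A" and j: "j \<in> {1..n} - A"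
    and same_block: "i \<le> k \<longleftrightarrow> j \<le> k" and tie: "a i = a j"
  shows "j < i"
proof (rule ccontr)
  assume "\<not> j < i"
  moreover have "i \<noteq> j"
    using i j by blast
  ultimately have i_less_j: "i < j"
    by simp
  note tie_facts = opt i j same_block tie i_less_j
  have "int (card (out_nbrs B j)) \<le> int (card (out_nbrs B i))"
    using card_out_nbrs[of B i] card_out_nbrs[of B j] tie_out_block_eq[OF tie_facts]
      tie_partner_mono[OF tie_facts]
    by auto
  then have "cap (insert j (A - {i})) B \<le> cap A B"
    using cap_swap_v[OF tie_i_range[OF tie_facts] i, of j B] j tie same_block by (simp add: src_cap_def)
  moreover have "insert j (A - {i}) \<subseteq> {1..n}"
    using optimalD(1)[OF opt] j by auto
  ultimately have "pot A B \<le> pot (insert j (A - {i})) B"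
    using optimal_pot_le[OF opt _ optimalD(2)[OF opt]] by blast
  then show False
    using pot_swap_v[OF optimalD(3)[OF opt] i, of j B] j tie_v_weight_diff[OF tie_facts] i_less_j
    by simp
qed

lemma cut_capacity_eq_cap:
  assumes cut: "is_st_cut n m X"
  shows "cut_capacity n m a b \<nu> k X = cap {x. Vv x \<in> X} {y. Ww y \<in> X}"
proof -
  define A where "A = {x. Vv x \<in> X}"
  define B where "B = {y. Ww y \<in> X}"
  have B_m: "B \<subseteq> {1..m}" and st: "Src \<in> X" "Snk \<notin> X"
    using cut by (auto simp: is_st_cut_def net_vertices_def B_def)
  let ?c = "net_cap a b \<nu> k"
  let ?S = "(\<lambda>x. (Src, Vv x)) ` ({1..n} - A)" and ?T = "(\<lambda>y. (Ww y, Snk)) ` B"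
    and ?U = "(\<lambda>(x, y). (Vv x, Ww y)) ` cut_arcs A B"
  have "{e \<in> net_arcs n m \<nu> k. fst e \<in> X \<and> snd e \<notin> X} = ?S \<union> ?T \<union> ?U"
    using st B_m
    by (auto simp: net_arcs_def arc_def block_arc_def cut_arcs_def A_def B_def)
  moreover have "finite ?S" "finite ?T" "finite ?U"
    using B_m finite_subset finite_cut_arcs by auto
  moreover have "(?S \<union> ?T) \<inter> ?U = {}" "?S \<inter> ?T = {}"
    by auto
  ultimately have "cut_capacity n m a b \<nu> k X = sum ?c ?S + sum ?c ?T + sum ?c ?U"
    unfolding cut_capacity_def by (simp add: sum.union_disjoint)
  moreover have "sum ?c ?S = (\<Sum>x \<in> {1..n} - A. src_cap x)"
    by (subst sum.reindex) (auto simp: inj_on_def net_cap_def src_cap_def)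
  moreover have "sum ?c ?T = (\<Sum>y \<in> B. snk_cap y)"
    by (subst sum.reindex) (auto simp: inj_on_def net_cap_def snk_cap_def)
  moreover have "sum ?c ?U = int (card (cut_arcs A B))"
  proof -
    have "sum ?c ?U = (\<Sum>_ \<in> ?U. 1)"
      by (rule sum.cong) (auto simp: net_cap_def)
    also have "\<dots> = int (card ?U)"
      by simp
    also have "card ?U = card (cut_arcs A B)"
      by (intro card_image) (auto simp: inj_on_def)
    finally show ?thesis .
  qed
  ultimately show ?thesis
    by (simp add: cap_def A_def B_def)
qed

lemma optimal_is_min_cut:
  assumes opt: "optimal A B"
  shows "is_min_cut n m a b \<nu> k (insert Src (Vv ` A \<union> Ww ` B))" (is "is_min_cut _ _ _ _ _ _ ?X")
proof -
  have cut: "is_st_cut n m ?X"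
    using optimalD(1,2)[OF opt] by (auto simp: is_st_cut_def net_vertices_def)
  have parts: "{x. Vv x \<in> ?X} = A" "{y. Ww y \<in> ?X} = B"
    by auto
  have "cut_capacity n m a b \<nu> k ?X \<le> cut_capacity n m a b \<nu> k Y" if "is_st_cut n m Y" for Y
  proof -
    have "{x. Vv x \<in> Y} \<subseteq> {1..n}" "{y. Ww y \<in> Y} \<subseteq> {1..m}"
      using that by (auto simp: is_st_cut_def net_vertices_def)
    then show ?thesis
      unfolding cut_capacity_eq_cap[OF cut] cut_capacity_eq_cap[OF that] parts
      by (rule optimal_cap_le[OF opt])
  qed
  with cut show ?thesis
    by (simp add: is_min_cut_def)
qed

lemma optimal_is_clean:
  assumes opt: "optimal A B"
  shows "is_clean n m a b \<nu> k (insert Src (Vv ` A \<union> Ww ` B))"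
proof -
  have mem: "Vv x \<in> insert Src (Vv ` A \<union> Ww ` B) \<longleftrightarrow> x \<in> A"
    "Ww y \<in> insert Src (Vv ` A \<union> Ww ` B) \<longleftrightarrow> y \<in> B" for x y
    by auto
  show ?thesis
    unfolding is_clean_def mem
    using k_le_nu nu_le_n nu_le_m
    by (auto intro!: optimal_v_sorted[OF opt] optimal_w_sorted[OF opt] optimal_v_tie[OF opt])
qed

end

theorem lemma3:
  fixes n m \<nu> k :: nat and a b :: "nat \<Rightarrow> nat"
  assumes "n \<ge> 1" and "m \<ge> 1"
    and "\<And>i j. 1 \<le> i \<Longrightarrow> i \<le> j \<Longrightarrow> j \<le> n \<Longrightarrow> a j \<le> a i"
    and "\<And>i j. 1 \<le> i \<Longrightarrow> i \<le> j \<Longrightarrow> j \<le> m \<Longrightarrow> b j \<le> b i"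
    and "k \<le> \<nu>" and "\<nu> \<le> min n m"
  shows "\<exists>X. is_min_cut n m a b \<nu> k X \<and> is_clean n m a b \<nu> k X"
proof -
  interpret cut_network n m \<nu> k a b
    using assms by unfold_locales auto
  obtain A B where "optimal A B"
    using optimal_exists by blast
  then show ?thesis
    using optimal_is_min_cut optimal_is_clean by blast
qed

end
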